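(* For each $n$, let $H^n_{m_n}=((x^n_1,y^n_1),\dots,(x^n_{m_n},y^n_{m_n}))$ be an independent trajectory of length $m_n$ generated by the adaptive linear Gaussian sampling procedure with a sampling rule $\Lambda^n$ (which may depend on $n$), where the true coefficient vector $\beta_0\in\mathbb{R}^p$ and variance $\sigma^2>0$ are the same for all $n$. Let $\mathbf{X}_n$ be the $m_n\times p$ matrix with rows $(x^n_j)^\top$ and $\mathbf{y}_n=(y^n_1,\dots,y^n_{m_n})^\top$. Assume: (i) each $x^n_j$ is a standard basis vector, $x^n_j\in\{e_1,\dots,e_p\}$; (ii) $\lambda_{\min}(\mathbf{X}_n^\top\mathbf{X}_n)\xrightarrow{p}\infty$. Then the MLE $\hat\beta_n=(\mathbf{X}_n^\top\mathbf{X}_n)^{-1}\mathbf{X}_n^\top\mathbf{y}_n$ is consistent: $\hat\beta_n\xrightarrow{p}\beta_0$.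
   Context: Adaptive linear Gaussian sampling procedure: given a covariate sampling rule $\Lambda$ that maps any finite history $H_{j-1}=((x_1,y_1),\dots,(x_{j-1},y_{j-1}))$ to a probability distribution $\Lambda(\cdot\mid H_{j-1})$ on $\mathbb{R}^p$, a coefficient vector $\beta\in\mathbb{R}^p$ and known variance $\sigma^2>0$, set $H_0=\emptyset$ and for $j=1,2,\dots$: draw $x_j\sim\Lambda(\cdot\mid H_{j-1})$, then draw $y_j\sim\mathcal{N}(x_j^\top\beta,\sigma^2)$ conditionally on the past and $x_j$, and set $H_j=((x_1,y_1),\dots,(x_j,y_j))$. When all $x_j$ are basis vectors, $\mathbf{X}_n^\top\mathbf{X}_n$ is diagonal with $i$-th entry the number of times $e_i$ was chosen, and $\hat\beta_{n,i}$ is the sample mean of the $y$'s observed with $x=e_i$. $\lambda_{\min}$ denotes the smallest eigenvalue. *)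

theory Defs
  imports "HOL-Probability.Probability"
begin

text \<open>A trajectory of length j is represented as an extensional function
  h :: nat => (real^'p * real) on {..<j}, with h k = (x_{k+1}, y_{k+1}).
  The sampling rule is given, for each history length j, as a kernel
  Lam j from histories of length j to distributions on real^'p.
  sigma is the standard deviation (variance sigma^2).\<close>

type_synonym 'p hist = "nat \<Rightarrow> ((real^'p) \<times> real)"

definition hist_space :: "nat \<Rightarrow> 'p::finite hist measure" where
  "hist_space j = PiM {..<j} (\<lambda>_. borel)"

fun adaptive_traj ::
  "(nat \<Rightarrow> 'p::finite hist \<Rightarrow> (real^'p) measure) \<Rightarrow> real^'p \<Rightarrow> real \<Rightarrow> nat \<Rightarrow> 'p hist measure" where
  "adaptive_traj Lam \<beta> \<sigma> 0 = return (hist_space 0) (\<lambda>_. undefined)"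
| "adaptive_traj Lam \<beta> \<sigma> (Suc j) =
     adaptive_traj Lam \<beta> \<sigma> j \<bind> (\<lambda>h.
       Lam j h \<bind> (\<lambda>x.
         density lborel (normal_density (x \<bullet> \<beta>) \<sigma>) \<bind> (\<lambda>y.
           return (hist_space (Suc j)) (h(j := (x, y))))))"

text \<open>X^T X and X^T y for the design matrix with rows x_1..x_m (written out
  as sums over rows, since m varies).\<close>
definition gram :: "nat \<Rightarrow> 'p::finite hist \<Rightarrow> real^'p^'p" where
  "gram m h = (\<chi> i k. \<Sum>j<m. fst (h j) $ i * fst (h j) $ k)"

definition Xty :: "nat \<Rightarrow> 'p::finite hist \<Rightarrow> real^'p" where
  "Xty m h = (\<chi> i. \<Sum>j<m. snd (h j) * fst (h j) $ i)"

definition mle :: "nat \<Rightarrow> 'p::finite hist \<Rightarrow> real^'p" where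
  "mle m h = matrix_inv (gram m h) *v Xty m h"

definition lambda_min :: "real^'n^'n \<Rightarrow> real" where
  "lambda_min A = Min {l. \<exists>v. v \<noteq> 0 \<and> A *v v = l *\<^sub>R v}"

end

(*
  For a design of basis vectors, X^T X is diagonal with entries N_i (the number of draws of e_i),
  and the MLE error is (beta_hat - beta)_i = S_i / N_i with S = X^T (y - X beta).  For a fixed
  B > 0, the potential S_i^2 / (N_i + B)^2 + sigma^2 / (N_i + B) is a supermartingale along the
  trajectory whatever the sampling rule, so its expectation is at most sigma^2 / B.  On the event
  lambda_min > B all N_i exceed B, hence (S_i / N_i)^2 <= 4 S_i^2 / (N_i + B)^2, and Markov's
  inequality yields
    P(|beta_hat - beta| > eps) <= P(lambda_min <= B) + 4 p sigma^2 / (eps^2 B).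
  Letting first n and then B tend to infinity proves consistency.
*)

theory Submission
  imports Defs "HOL-Computational_Algebra.Polynomial"
begin

lemma measurable_hist_upd:
  assumes "f \<in> M \<rightarrow>\<^sub>M hist_space j" "g \<in> M \<rightarrow>\<^sub>M borel" "k \<in> M \<rightarrow>\<^sub>M borel"
  shows "(\<lambda>w. (f w)(j := (g w, k w))) \<in> M \<rightarrow>\<^sub>M hist_space (Suc j)"
  using assms unfolding hist_space_def
  by (intro measurable_fun_upd[where J="{..<j}"]) (auto simp flip: borel_prod)

lemma measurable_hist_component:
  assumes "k < m"
  shows "(\<lambda>h. h k) \<in> hist_space m \<rightarrow>\<^sub>M borel \<Otimes>\<^sub>M borel"
  unfolding hist_space_def borel_prod using assms by (intro measurable_component_singleton) auto

lemma borel_measurable_hist_fst: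
  "j < m \<Longrightarrow> (\<lambda>h. fst (h j)) \<in> borel_measurable (hist_space m)"
  by (intro measurable_compose[OF measurable_hist_component measurable_fst])

lemma measurable_normal_kernel:
  fixes \<beta> :: "'a::euclidean_space"
  assumes "\<sigma> > 0"
  shows "(\<lambda>x. density lborel (normal_density (x \<bullet> \<beta>) \<sigma>)) \<in> borel \<rightarrow>\<^sub>M prob_algebra borel"
proof (rule measurable_prob_algebraI)
  fix x :: "'a::euclidean_space"
  show "prob_space (density lborel (normal_density (x \<bullet> \<beta>) \<sigma>))"
    using prob_space_normal_density[OF assms] .
next
  show "(\<lambda>x. density lborel (normal_density (x \<bullet> \<beta>) \<sigma>)) \<in> borel \<rightarrow>\<^sub>M subprob_algebra borel"
  proof (rule measurable_subprob_algebra)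
    fix x :: 'a
    show "subprob_space (density lborel (normal_density (x \<bullet> \<beta>) \<sigma>))"
      using prob_space_normal_density[OF assms] by (rule prob_space_imp_subprob_space)
  next
    fix A :: "real set" assume A: "A \<in> sets borel"
    then have "(\<lambda>x. \<integral>\<^sup>+y. ennreal (normal_density (x \<bullet> \<beta>) \<sigma> y) * indicator A y \<partial>lborel) \<in> borel_measurable borel"
      unfolding normal_density_def by measurable
    with A show "(\<lambda>x. emeasure (density lborel (normal_density (x \<bullet> \<beta>) \<sigma>)) A) \<in> borel_measurable borel"
      by (simp add: emeasure_density)
  qed simp
qed

definition sampling_step ::
  "(nat \<Rightarrow> 'p::finite hist \<Rightarrow> (real^'p) measure) \<Rightarrow> real^'p \<Rightarrow> real \<Rightarrow> nat \<Rightarrow> 'p hist \<Rightarrow> 'p hist measure" where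
  "sampling_step Lam \<beta> \<sigma> j h = Lam j h \<bind> (\<lambda>x.
     density lborel (normal_density (x \<bullet> \<beta>) \<sigma>) \<bind> (\<lambda>y. return (hist_space (Suc j)) (h(j := (x, y)))))"

lemma adaptive_traj_Suc:
  "adaptive_traj Lam \<beta> \<sigma> (Suc j) = adaptive_traj Lam \<beta> \<sigma> j \<bind> sampling_step Lam \<beta> \<sigma> j"
  by (simp add: sampling_step_def[abs_def])

lemma measurable_sampling_step:
  assumes "\<sigma> > 0" and [measurable]: "Lam j \<in> hist_space j \<rightarrow>\<^sub>M prob_algebra borel"
  shows "sampling_step Lam \<beta> \<sigma> j \<in> hist_space j \<rightarrow>\<^sub>M prob_algebra (hist_space (Suc j))"
proof -
  note [measurable] = measurable_normal_kernel[OF assms(1)]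
    measurable_hist_upd[of "\<lambda>w. fst (fst w)" _ j "\<lambda>w. snd (fst w)" snd]
  show ?thesis unfolding sampling_step_def by measurable
qed

lemma adaptive_traj_in_prob_algebra:
  assumes "\<sigma> > 0" and "\<And>j. Lam j \<in> hist_space j \<rightarrow>\<^sub>M prob_algebra borel"
  shows "adaptive_traj Lam \<beta> \<sigma> m \<in> space (prob_algebra (hist_space m))"
proof (induction m)
  case 0
  have "(\<lambda>_. undefined) \<in> space (hist_space 0 :: 'a hist measure)"
    unfolding hist_space_def by (simp add: space_PiM)
  then show ?case by (auto intro: prob_space_return simp: space_prob_algebra)
next
  case (Suc m)
  show ?case
    unfolding adaptive_traj_Suc
    by (rule measurable_space[OF measurable_bind_prob_space[OF measurable_const[OF Suc.IH, of "count_space UNIV"]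
          measurable_sampling_step[where Lam=Lam and j=m, OF assms]], of undefined]) simp
qed

lemma
  assumes "\<sigma> > 0" and "\<And>j. Lam j \<in> hist_space j \<rightarrow>\<^sub>M prob_algebra borel"
  shows sets_adaptive_traj: "sets (adaptive_traj Lam \<beta> \<sigma> m) = sets (hist_space m)"
    and prob_space_adaptive_traj: "prob_space (adaptive_traj Lam \<beta> \<sigma> m)"
  using adaptive_traj_in_prob_algebra[OF assms, of \<beta> m] by (auto simp: space_prob_algebra)

section \<open>A supermartingale\<close>

definition Xt_noise :: "nat \<Rightarrow> 'p::finite hist \<Rightarrow> real^'p \<Rightarrow> real^'p" where
  "Xt_noise m h \<beta> = (\<chi> i. \<Sum>j<m. (snd (h j) - fst (h j) \<bullet> \<beta>) * fst (h j) $ i)"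

definition potential :: "real \<Rightarrow> real^'p \<Rightarrow> real \<Rightarrow> nat \<Rightarrow> 'p::finite hist \<Rightarrow> 'p \<Rightarrow> real" where
  "potential \<sigma> \<beta> B m h i =
     (Xt_noise m h \<beta> $ i)\<^sup>2 / (gram m h $ i $ i + B)\<^sup>2 + \<sigma>\<^sup>2 / (gram m h $ i $ i + B)"

lemma gram_diag_nonneg: "gram m h $ i $ i \<ge> 0"
  unfolding gram_def by (auto intro: sum_nonneg)

lemma gram_diag_upd: "gram (Suc j) (h(j := (x, y))) $ i $ i = gram j h $ i $ i + (x $ i)\<^sup>2"
  unfolding gram_def by (simp add: power2_eq_square)

lemma Xt_noise_upd:
  "Xt_noise (Suc j) (h(j := (x, y))) \<beta> $ i = Xt_noise j h \<beta> $ i + (y - x \<bullet> \<beta>) * x $ i"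
  unfolding Xt_noise_def by simp

lemma potential_nonneg: "B \<ge> 0 \<Longrightarrow> potential \<sigma> \<beta> B m h i \<ge> 0"
  unfolding potential_def using gram_diag_nonneg[of m h i] by auto

lemma borel_measurable_potential:
  "(\<lambda>h. potential \<sigma> \<beta> B m h i) \<in> borel_measurable (hist_space m)"
proof -
  have [measurable]: "(\<lambda>h. h j) \<in> hist_space m \<rightarrow>\<^sub>M borel \<Otimes>\<^sub>M borel" if "j \<in> {..<m}" for j
    using that by (intro measurable_hist_component) simp
  have [measurable]: "(\<lambda>h. fst (h j) $ k) \<in> borel_measurable (hist_space m)" if "j \<in> {..<m}" for j k
    using that by (intro measurable_compose[OF borel_measurable_hist_fst borel_measurable_nth]) simp
  show ?thesis
    unfolding potential_def gram_def Xt_noise_def vec_lambda_beta by measurable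
qed

lemma borel_measurable_potential_ennreal:
  "(\<lambda>h. ennreal (potential \<sigma> \<beta> B m h i)) \<in> borel_measurable (hist_space m)"
  using borel_measurable_potential by measurable

lemma nn_integral_normal_quadratic:
  fixes c d s a \<mu> \<sigma> :: real
  assumes "\<sigma> > 0" "c \<ge> 0" "d \<ge> 0"
  shows "(\<integral>\<^sup>+y. ennreal (c * (s + (y - \<mu>) * a)\<^sup>2 + d) \<partial>density lborel (normal_density \<mu> \<sigma>))
       = ennreal (c * (s\<^sup>2 + \<sigma>\<^sup>2 * a\<^sup>2) + d)"
proof -
  let ?n = "normal_density \<mu> \<sigma>"
  have "has_bochner_integral lborel (\<lambda>y. ?n y * (y - \<mu>) ^ (2 * 0)) 1"
    and "has_bochner_integral lborel (\<lambda>y. ?n y * (y - \<mu>) ^ (2 * 0 + 1)) 0"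
    and "has_bochner_integral lborel (\<lambda>y. ?n y * (y - \<mu>) ^ (2 * 1)) (\<sigma>\<^sup>2)"
    using normal_moment_even[OF assms(1), of \<mu> 0] normal_moment_odd[OF assms(1), of \<mu> 0]
      normal_moment_even[OF assms(1), of \<mu> 1] by simp_all
  then have "has_bochner_integral lborel
     (\<lambda>y. (c * s\<^sup>2 + d) * (?n y * (y - \<mu>) ^ (2 * 0)) + (2 * c * s * a) * (?n y * (y - \<mu>) ^ (2 * 0 + 1))
        + (c * a\<^sup>2) * (?n y * (y - \<mu>) ^ (2 * 1)))
     ((c * s\<^sup>2 + d) * 1 + (2 * c * s * a) * 0 + (c * a\<^sup>2) * \<sigma>\<^sup>2)"
    by (intro has_bochner_integral_add has_bochner_integral_mult_right)
  then have H: "has_bochner_integral lborel (\<lambda>y. ?n y * (c * (s + (y - \<mu>) * a)\<^sup>2 + d))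
      (c * (s\<^sup>2 + \<sigma>\<^sup>2 * a\<^sup>2) + d)"
    by (rule has_bochner_integral_cong[THEN iffD1, rotated -1])
       (auto simp: power2_eq_square algebra_simps)
  have "(\<integral>\<^sup>+y. ennreal (c * (s + (y - \<mu>) * a)\<^sup>2 + d) \<partial>density lborel ?n)
      = (\<integral>\<^sup>+y. ennreal (?n y * (c * (s + (y - \<mu>) * a)\<^sup>2 + d)) \<partial>lborel)"
    using assms by (subst nn_integral_density) (auto simp: ennreal_mult normal_density_nonneg)
  also have "\<dots> = ennreal (c * (s\<^sup>2 + \<sigma>\<^sup>2 * a\<^sup>2) + d)"
    using H assms integrable.intros[OF H]
    by (subst nn_integral_eq_integral) (auto simp: normal_density_nonneg has_bochner_integral_integral_eq)
  finally show ?thesis .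
qed

text \<open>The decrease of \<open>\<sigma>\<^sup>2 / D\<close> pays for the variance \<open>\<sigma>\<^sup>2 a\<^sup>2\<close> that a new observation
  with covariate coordinate \<open>a\<close> adds to the noise sum \<open>s\<close>.\<close>

lemma potential_step_le:
  fixes D a s \<sigma> :: real
  assumes "D > 0"
  shows "(s\<^sup>2 + \<sigma>\<^sup>2 * a\<^sup>2) / (D + a\<^sup>2)\<^sup>2 + \<sigma>\<^sup>2 / (D + a\<^sup>2) \<le> s\<^sup>2 / D\<^sup>2 + \<sigma>\<^sup>2 / D"
proof -
  have E: "D + a\<^sup>2 > 0" using assms by (simp add: add_pos_nonneg)
  have "s\<^sup>2 / (D + a\<^sup>2)\<^sup>2 \<le> s\<^sup>2 / D\<^sup>2"
    using assms E by (intro divide_left_mono power_mono) auto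
  moreover have "\<sigma>\<^sup>2 * a\<^sup>2 / (D + a\<^sup>2)\<^sup>2 + \<sigma>\<^sup>2 / (D + a\<^sup>2) \<le> \<sigma>\<^sup>2 / D"
  proof -
    have "a\<^sup>2 / (D + a\<^sup>2)\<^sup>2 \<le> a\<^sup>2 / (D * (D + a\<^sup>2))"
      using assms E by (intro divide_left_mono) (auto simp: power2_eq_square)
    also have "\<dots> = 1 / D - 1 / (D + a\<^sup>2)"
      using assms E by (simp add: field_simps)
    finally have "\<sigma>\<^sup>2 * (a\<^sup>2 / (D + a\<^sup>2)\<^sup>2) \<le> \<sigma>\<^sup>2 * (1 / D - 1 / (D + a\<^sup>2))"
      by (intro mult_left_mono) auto
    then show ?thesis by (simp add: field_simps)
  qed
  ultimately show ?thesis by (simp add: add_divide_distrib)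
qed

lemma nn_integral_observation_potential:
  assumes "\<sigma> > 0" "B > 0" "h \<in> space (hist_space j)"
  shows "(\<integral>\<^sup>+g. ennreal (potential \<sigma> \<beta> B (Suc j) g i)
            \<partial>density lborel (normal_density (x \<bullet> \<beta>) \<sigma>) \<bind> (\<lambda>y. return (hist_space (Suc j)) (h(j := (x, y)))))
         \<le> ennreal (potential \<sigma> \<beta> B j h i)"
proof -
  let ?N = "density lborel (normal_density (x \<bullet> \<beta>) \<sigma>)"
  let ?s = "Xt_noise j h \<beta> $ i" and ?D = "gram j h $ i $ i + B"
  have upd[measurable]: "(\<lambda>y. h(j := (x, y))) \<in> borel \<rightarrow>\<^sub>M hist_space (Suc j)"
    using assms(3) by (intro measurable_hist_upd) auto
  have D: "?D > 0" using gram_diag_nonneg[of j h i] assms(2) by linarith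
  have "(\<integral>\<^sup>+g. ennreal (potential \<sigma> \<beta> B (Suc j) g i) \<partial>?N \<bind> (\<lambda>y. return (hist_space (Suc j)) (h(j := (x, y)))))
      = (\<integral>\<^sup>+y. ennreal (potential \<sigma> \<beta> B (Suc j) (h(j := (x, y))) i) \<partial>?N)"
    using measurable_space[OF upd] borel_measurable_potential_ennreal
    by (subst nn_integral_bind[where B="hist_space (Suc j)"]) (auto intro!: nn_integral_cong nn_integral_return)
  also have "\<dots> = (\<integral>\<^sup>+y. ennreal ((1 / (?D + (x $ i)\<^sup>2)\<^sup>2) * (?s + (y - x \<bullet> \<beta>) * x $ i)\<^sup>2
                               + \<sigma>\<^sup>2 / (?D + (x $ i)\<^sup>2)) \<partial>?N)"
    by (simp add: potential_def gram_diag_upd Xt_noise_upd ac_simps)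
  also have "\<dots> = ennreal ((1 / (?D + (x $ i)\<^sup>2)\<^sup>2) * (?s\<^sup>2 + \<sigma>\<^sup>2 * (x $ i)\<^sup>2) + \<sigma>\<^sup>2 / (?D + (x $ i)\<^sup>2))"
    using D assms(1) by (intro nn_integral_normal_quadratic) (auto intro: add_pos_nonneg)
  also have "\<dots> \<le> ennreal (potential \<sigma> \<beta> B j h i)"
    using potential_step_le[OF D, of ?s \<sigma> "x $ i"] by (intro ennreal_leI) (simp add: potential_def)
  finally show ?thesis .
qed

lemma nn_integral_sampling_step_potential:
  assumes "\<sigma> > 0" "B > 0" and Lam: "Lam j \<in> hist_space j \<rightarrow>\<^sub>M prob_algebra borel"
    and h: "h \<in> space (hist_space j)"
  shows "(\<integral>\<^sup>+g. ennreal (potential \<sigma> \<beta> B (Suc j) g i) \<partial>sampling_step Lam \<beta> \<sigma> j h)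
         \<le> ennreal (potential \<sigma> \<beta> B j h i)"
proof -
  note [measurable] = measurable_prob_algebraD[OF measurable_normal_kernel[OF assms(1)]]
    measurable_hist_upd[OF measurable_const[OF h] measurable_fst measurable_snd]
  have "(\<lambda>x. density lborel (normal_density (x \<bullet> \<beta>) \<sigma>) \<bind> (\<lambda>y. return (hist_space (Suc j)) (h(j := (x, y)))))
      \<in> Lam j h \<rightarrow>\<^sub>M subprob_algebra (hist_space (Suc j))"
    using sets_kernel[OF measurable_prob_algebraD[OF Lam] h] by (simp cong: measurable_cong_sets) measurable
  then have "(\<integral>\<^sup>+g. ennreal (potential \<sigma> \<beta> B (Suc j) g i) \<partial>sampling_step Lam \<beta> \<sigma> j h)
      = (\<integral>\<^sup>+x. \<integral>\<^sup>+g. ennreal (potential \<sigma> \<beta> B (Suc j) g i)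
           \<partial>density lborel (normal_density (x \<bullet> \<beta>) \<sigma>) \<bind> (\<lambda>y. return (hist_space (Suc j)) (h(j := (x, y))))
           \<partial>Lam j h)"
    unfolding sampling_step_def
    using borel_measurable_potential_ennreal by (intro nn_integral_bind)
  also have "\<dots> \<le> (\<integral>\<^sup>+x. ennreal (potential \<sigma> \<beta> B j h i) \<partial>Lam j h)"
    using assms(1,2) h by (intro nn_integral_mono nn_integral_observation_potential)
  also have "\<dots> = ennreal (potential \<sigma> \<beta> B j h i)"
    using measurable_space[OF Lam h] by (simp add: space_prob_algebra prob_space.emeasure_space_1)
  finally show ?thesis .
qed

lemma nn_integral_potential_le:
  assumes "\<sigma> > 0" "B > 0" and Lam: "\<And>j. Lam j \<in> hist_space j \<rightarrow>\<^sub>M prob_algebra borel"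
  shows "(\<integral>\<^sup>+h. ennreal (potential \<sigma> \<beta> B m h i) \<partial>adaptive_traj Lam \<beta> \<sigma> m) \<le> ennreal (\<sigma>\<^sup>2 / B)"
proof (induction m)
  case 0
  have "(\<lambda>_. undefined) \<in> space (hist_space 0 :: 'a hist measure)"
    unfolding hist_space_def by (simp add: space_PiM)
  then show ?case
    using borel_measurable_potential_ennreal
    by (simp add: nn_integral_return potential_def gram_def Xt_noise_def)
next
  case (Suc m)
  have sets: "sets (adaptive_traj Lam \<beta> \<sigma> m) = sets (hist_space m)"
    using sets_adaptive_traj[OF assms(1) Lam] .
  have "sampling_step Lam \<beta> \<sigma> m \<in> adaptive_traj Lam \<beta> \<sigma> m \<rightarrow>\<^sub>M subprob_algebra (hist_space (Suc m))"
    using measurable_prob_algebraD[OF measurable_sampling_step[where Lam=Lam and j=m, OF assms(1) Lam]]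
    by (simp cong: measurable_cong_sets[OF sets])
  then have "(\<integral>\<^sup>+h. ennreal (potential \<sigma> \<beta> B (Suc m) h i) \<partial>adaptive_traj Lam \<beta> \<sigma> (Suc m))
      = (\<integral>\<^sup>+h. \<integral>\<^sup>+g. ennreal (potential \<sigma> \<beta> B (Suc m) g i) \<partial>sampling_step Lam \<beta> \<sigma> m h
           \<partial>adaptive_traj Lam \<beta> \<sigma> m)"
    unfolding adaptive_traj_Suc
    using borel_measurable_potential_ennreal by (intro nn_integral_bind)
  also have "\<dots> \<le> (\<integral>\<^sup>+h. ennreal (potential \<sigma> \<beta> B m h i) \<partial>adaptive_traj Lam \<beta> \<sigma> m)"
    using sets_eq_imp_space_eq[OF sets] assms
    by (intro nn_integral_mono nn_integral_sampling_step_potential) auto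
  finally show ?case using Suc.IH by (rule order.trans)
qed

lemma nn_integral_sum_potential_le:
  fixes Lam :: "nat \<Rightarrow> 'p::finite hist \<Rightarrow> (real^'p) measure"
  assumes "\<sigma> > 0" "B > 0" and Lam: "\<And>j. Lam j \<in> hist_space j \<rightarrow>\<^sub>M prob_algebra borel"
  shows "(\<integral>\<^sup>+h. ennreal (\<Sum>i\<in>UNIV. potential \<sigma> \<beta> B m h i) \<partial>adaptive_traj Lam \<beta> \<sigma> m)
         \<le> ennreal (real CARD('p) * (\<sigma>\<^sup>2 / B))"
proof -
  have "(\<lambda>h. ennreal (potential \<sigma> \<beta> B m h i)) \<in> borel_measurable (adaptive_traj Lam \<beta> \<sigma> m)" for i
    unfolding measurable_cong_sets[OF sets_adaptive_traj[OF assms(1) Lam] refl]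
    by (rule borel_measurable_potential_ennreal)
  then have "(\<integral>\<^sup>+h. ennreal (\<Sum>i\<in>UNIV. potential \<sigma> \<beta> B m h i) \<partial>adaptive_traj Lam \<beta> \<sigma> m)
      = (\<Sum>i\<in>UNIV. \<integral>\<^sup>+h. ennreal (potential \<sigma> \<beta> B m h i) \<partial>adaptive_traj Lam \<beta> \<sigma> m)"
    using assms(2) by (simp add: potential_nonneg nn_integral_sum flip: sum_ennreal)
  also have "\<dots> \<le> (\<Sum>i\<in>(UNIV::'p set). ennreal (\<sigma>\<^sup>2 / B))"
    using assms by (intro sum_mono nn_integral_potential_le)
  also have "\<dots> = ennreal (real CARD('p) * (\<sigma>\<^sup>2 / B))"
    using assms(2) by (simp add: ennreal_of_nat_eq_real_of_nat flip: ennreal_mult)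
  finally show ?thesis .
qed

section \<open>Real eigenvalues\<close>

definition eigenvalues :: "real^'n::finite^'n \<Rightarrow> real set" where
  "eigenvalues A = {l. \<exists>v. v \<noteq> 0 \<and> A *v v = l *\<^sub>R v}"

lemma eigenvalue_iff_det: "l \<in> eigenvalues A \<longleftrightarrow> det (A - l *\<^sub>R mat 1) = 0"
proof -
  have "(A - l *\<^sub>R mat 1) *v v = A *v v - l *\<^sub>R v" for v
    by (simp add: matrix_vector_mult_diff_rdistrib scaleR_matrix_vector_assoc[symmetric])
  then have "l \<in> eigenvalues A \<longleftrightarrow> (\<exists>v. v \<noteq> 0 \<and> (A - l *\<^sub>R mat 1) *v v = 0)"
    by (simp add: eigenvalues_def)
  also have "\<dots> \<longleftrightarrow> det (A - l *\<^sub>R mat 1) = 0"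
    using det_eq_0_rank[of "A - l *\<^sub>R mat 1"] rank_bound[of "A - l *\<^sub>R mat 1"]
      matrix_nonfull_linear_equations_eq[of "A - l *\<^sub>R mat 1"] by (simp only:) linarith
  finally show ?thesis .
qed

lemma eigenvalues_bounded: "\<exists>K. \<forall>l\<in>eigenvalues A. \<bar>l\<bar> \<le> K"
proof -
  obtain K where K: "\<And>x. norm (A *v x) \<le> norm x * K"
    using bounded_linear.bounded[OF matrix_vector_mul_bounded_linear] by blast
  have "\<bar>l\<bar> \<le> K" if l: "l \<in> eigenvalues A" for l
  proof -
    obtain v where v: "v \<noteq> 0" "A *v v = l *\<^sub>R v" using l unfolding eigenvalues_def by blast
    then have "\<bar>l\<bar> * norm v \<le> K * norm v" using K[of v] by (simp add: mult.commute)
    moreover have "norm v > 0" using v(1) by simp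
    ultimately show ?thesis by (rule mult_right_le_imp_le)
  qed
  then show ?thesis by blast
qed

definition char_poly :: "real^'n::finite^'n \<Rightarrow> real poly" where
  "char_poly A = (\<Sum>p | p permutes (UNIV::'n set). of_int (sign p) *
      (\<Prod>i\<in>UNIV. [: A $ i $ p i, - (if i = p i then 1 else 0) :]))"

lemma poly_char_poly: "poly (char_poly A) l = det (A - l *\<^sub>R mat 1)"
  unfolding char_poly_def det_def poly_sum by (intro sum.cong refl) (simp add: poly_prod mat_def)

lemma finite_eigenvalues: "finite (eigenvalues A)"
proof -
  obtain K where K: "\<forall>l\<in>eigenvalues A. \<bar>l\<bar> \<le> K" using eigenvalues_bounded by blast
  then have "K + 1 \<notin> eigenvalues A" by force
  then have "char_poly A \<noteq> 0" by (metis poly_0 poly_char_poly eigenvalue_iff_det)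
  moreover have "eigenvalues A \<subseteq> {l. poly (char_poly A) l = 0}"
    by (auto simp: poly_char_poly eigenvalue_iff_det)
  ultimately show ?thesis using poly_roots_finite finite_subset by blast
qed

lemma closed_det_shift_zero:
  assumes "compact S"
  shows "closed {A::real^'n::finite^'n. \<exists>l\<in>S. det (A - l *\<^sub>R mat 1) = 0}"
proof -
  have "closed {z::real \<times> (real^'n^'n). det (snd z - fst z *\<^sub>R mat 1) = 0}"
    unfolding det_def by (intro closed_Collect_eq continuous_intros)
  from closed_compact_projection[OF assms this] show ?thesis by (simp add: Bex_def)
qed

lemma sets_det_shift_zero:
  assumes "closed S"
  shows "{A::real^'n::finite^'n. \<exists>l\<in>S. det (A - l *\<^sub>R mat 1) = 0} \<in> sets borel"
proof -
  have bex: "(\<exists>l\<in>S. P l) \<longleftrightarrow> (\<exists>N::nat. \<exists>l\<in>S \<inter> {- real N..real N}. P l)" for P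
  proof
    assume "\<exists>l\<in>S. P l"
    then obtain l where "l \<in> S" "P l" by blast
    moreover obtain N :: nat where "\<bar>l\<bar> \<le> real N" using real_arch_simple by blast
    ultimately show "\<exists>N::nat. \<exists>l\<in>S \<inter> {- real N..real N}. P l"
      by (intro exI[of _ N] bexI[of _ l]) (auto simp: abs_le_iff)
  qed auto
  have "(\<Union>N::nat. {A::real^'n^'n. \<exists>l\<in>S \<inter> {- real N..real N}. det (A - l *\<^sub>R mat 1) = 0}) \<in> sets borel"
    using assms by (intro sets.countable_UN image_subsetI borel_closed closed_det_shift_zero) auto
  then show ?thesis by (simp only: bex Collect_ex_eq)
qed

text \<open>Without real eigenvalues, \<^const>\<open>lambda_min\<close> is the unspecified value \<open>Min {}\<close>.\<close>

lemma lambda_min_le_iff: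
  "lambda_min A \<le> B \<longleftrightarrow> (\<exists>l\<in>eigenvalues A. l \<le> B) \<or> (eigenvalues A = {} \<and> Min {} \<le> B)"
  using finite_eigenvalues[of A] unfolding lambda_min_def eigenvalues_def[symmetric]
  by (cases "eigenvalues A = {}") (simp_all add: Min_le_iff)

lemma borel_measurable_lambda_min:
  "lambda_min \<in> borel_measurable (borel :: (real^'n::finite^'n) measure)"
proof (subst borel_measurable_iff_le, intro allI)
  fix B :: real
  have "{A \<in> space borel. lambda_min A \<le> B}
      = {A::real^'n^'n. \<exists>l\<in>{..B}. det (A - l *\<^sub>R mat 1) = 0}
        \<union> (if Min {} \<le> B then - {A. \<exists>l\<in>UNIV. det (A - l *\<^sub>R mat 1) = 0} else {})"
    by (auto simp: lambda_min_le_iff eigenvalue_iff_det)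
  also have "\<dots> \<in> sets borel"
    using sets_det_shift_zero[of "{..B}"] borel_comp[OF sets_det_shift_zero[of UNIV]]
    by (auto intro!: sets.Un)
  finally show "{A \<in> space borel. lambda_min (A::real^'n^'n) \<le> B} \<in> sets borel" .
qed

lemma matrix_vector_mult_diagonal_nth:
  assumes "\<And>i j. i \<noteq> j \<Longrightarrow> A $ i $ j = 0"
  shows "(A *v x) $ i = A $ i $ i * x $ i"
proof -
  have "(A *v x) $ i = (\<Sum>k\<in>UNIV. if k = i then A $ i $ i * x $ k else 0)"
    unfolding matrix_vector_mult_def vec_lambda_beta by (rule sum.cong) (auto simp: assms)
  then show ?thesis by simp
qed

lemma lambda_min_le_diagonal:
  assumes "\<And>i j. i \<noteq> j \<Longrightarrow> A $ i $ j = 0"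
  shows "lambda_min A \<le> A $ i $ i"
proof -
  have "A *v axis i 1 = A $ i $ i *\<^sub>R axis i 1"
    by (auto simp: vec_eq_iff matrix_vector_mult_diagonal_nth[OF assms] axis_def)
  then have "A $ i $ i \<in> eigenvalues A"
    unfolding eigenvalues_def by (intro CollectI exI[of _ "axis i 1"]) (simp add: axis_eq_0_iff)
  with finite_eigenvalues show ?thesis
    unfolding lambda_min_def eigenvalues_def[symmetric] by (rule Min_le)
qed

lemma matrix_inv_right: "invertible A \<Longrightarrow> A ** matrix_inv A = mat 1"
  and matrix_inv_left: "invertible A \<Longrightarrow> matrix_inv A ** A = mat 1"
  unfolding invertible_def matrix_inv_def by (metis (mono_tags, lifting) someI_ex)+

lemma matrix_inv_diagonal_mult_nth:
  fixes A :: "'a::field^'n::finite^'n"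
  assumes "\<And>i j. i \<noteq> j \<Longrightarrow> A $ i $ j = 0" "\<And>i. A $ i $ i \<noteq> 0"
  shows "(matrix_inv A *v b) $ i = b $ i / A $ i $ i"
proof -
  have "invertible A" using assms by (simp add: invertible_det_nz det_diagonal)
  then have "A *v (matrix_inv A *v b) = b"
    by (simp add: matrix_vector_mul_assoc matrix_inv_right)
  then have "A $ i $ i * (matrix_inv A *v b) $ i = b $ i"
    by (metis matrix_vector_mult_diagonal_nth[OF assms(1)])
  with assms(2)[of i] show ?thesis by (simp add: field_simps)
qed

lemma Xty_eq_gram_mult_plus_Xt_noise: "Xty m h = gram m h *v \<beta> + Xt_noise m h \<beta>"
proof -
  have "(gram m h *v \<beta>) $ i = (\<Sum>j<m. (fst (h j) \<bullet> \<beta>) * fst (h j) $ i)" for i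
    by (simp add: gram_def matrix_vector_mult_def inner_vec_def sum_distrib_left sum_distrib_right
        sum.swap[of _ UNIV] ac_simps)
  then show ?thesis
    by (simp add: vec_eq_iff Xty_def Xt_noise_def algebra_simps sum.distrib[symmetric])
qed

lemma mle_minus_eq:
  assumes "invertible (gram m h)"
  shows "mle m h - \<beta> = matrix_inv (gram m h) *v Xt_noise m h \<beta>"
  using matrix_inv_left[OF assms]
  by (simp add: mle_def Xty_eq_gram_mult_plus_Xt_noise[of m h \<beta>] matrix_vector_right_distrib
      matrix_vector_mul_assoc)

definition basis_design :: "nat \<Rightarrow> 'p::finite hist \<Rightarrow> bool" where
  "basis_design m h \<longleftrightarrow> (\<forall>j<m. \<exists>i. fst (h j) = axis i 1)"

lemma gram_offdiag_basis_design:
  assumes "basis_design m h" "i \<noteq> k"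
  shows "gram m h $ i $ k = 0"
  using assms unfolding gram_def basis_design_def by (auto intro!: sum.neutral simp: axis_def)

lemma mle_minus_nth_basis_design:
  assumes "basis_design m h" "\<And>i. gram m h $ i $ i \<noteq> 0"
  shows "(mle m h - \<beta>) $ i = Xt_noise m h \<beta> $ i / gram m h $ i $ i"
proof -
  have "invertible (gram m h)"
    using assms by (simp add: invertible_det_nz det_diagonal gram_offdiag_basis_design)
  then show ?thesis
    using assms by (simp add: mle_minus_eq matrix_inv_diagonal_mult_nth gram_offdiag_basis_design)
qed

lemma norm_mle_minus_sq_le_potential:
  assumes "basis_design m h" "B > 0" "\<And>i. gram m h $ i $ i \<ge> B"
  shows "(norm (mle m h - \<beta>))\<^sup>2 \<le> 4 * (\<Sum>i\<in>UNIV. potential \<sigma> \<beta> B m h i)"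
proof -
  have N: "gram m h $ i $ i > 0" for i
    using assms(2) assms(3)[of i] by linarith
  then have nz: "gram m h $ i $ i \<noteq> 0" for i
    by (metis less_irrefl)
  have "((mle m h - \<beta>) $ i)\<^sup>2 \<le> 4 * potential \<sigma> \<beta> B m h i" for i
  proof -
    let ?S = "Xt_noise m h \<beta> $ i" and ?N = "gram m h $ i $ i"
    have "((mle m h - \<beta>) $ i)\<^sup>2 = ?S\<^sup>2 / ?N\<^sup>2"
      by (simp only: mle_minus_nth_basis_design[OF assms(1) nz] power_divide)
    also have "\<dots> \<le> ?S\<^sup>2 / ((?N + B) / 2)\<^sup>2"
      using assms(2) assms(3)[of i] N[of i] by (intro divide_left_mono power_mono) auto
    also have "\<dots> = 4 * (?S\<^sup>2 / (?N + B)\<^sup>2)"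
      by (simp add: power_divide)
    also have "\<dots> \<le> 4 * potential \<sigma> \<beta> B m h i"
      using N[of i] assms(2) by (simp add: potential_def)
    finally show ?thesis .
  qed
  then have "(\<Sum>i\<in>UNIV. ((mle m h - \<beta>) $ i)\<^sup>2) \<le> 4 * (\<Sum>i\<in>UNIV. potential \<sigma> \<beta> B m h i)"
    by (simp add: sum_distrib_left sum_mono)
  then show ?thesis by (simp add: norm_vec_def L2_set_def sum_nonneg)
qed

lemma potential_ge_of_mle_error_gt:
  assumes "basis_design m h" "B > 0" "\<epsilon> > 0"
    and "B < lambda_min (gram m h)" "\<epsilon> < norm (mle m h - \<beta>)"
  shows "\<epsilon>\<^sup>2 / 4 \<le> (\<Sum>i\<in>UNIV. potential \<sigma> \<beta> B m h i)"
proof -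
  have "lambda_min (gram m h) \<le> gram m h $ i $ i" for i
    using gram_offdiag_basis_design[OF assms(1)] by (rule lambda_min_le_diagonal)
  with assms(4) have "gram m h $ i $ i \<ge> B" for i
    by (meson less_le_trans less_imp_le)
  then have "(norm (mle m h - \<beta>))\<^sup>2 \<le> 4 * (\<Sum>i\<in>UNIV. potential \<sigma> \<beta> B m h i)"
    by (rule norm_mle_minus_sq_le_potential[OF assms(1,2)])
  moreover have "\<epsilon>\<^sup>2 < (norm (mle m h - \<beta>))\<^sup>2"
    using assms(3,5) by (intro power_strict_mono) auto
  ultimately show ?thesis by simp
qed

lemma borel_measurable_gram: "gram m \<in> borel_measurable (hist_space m :: 'p::finite hist measure)"
proof -
  have c: "continuous_on UNIV (\<lambda>x::real^'p. \<chi> i k. x $ i * x $ k)"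
    by (intro continuous_intros)
  have "gram m = (\<lambda>h::'p hist. \<Sum>j<m. \<chi> i k. fst (h j) $ i * fst (h j) $ k)"
    by (simp add: fun_eq_iff vec_eq_iff gram_def)
  also have "\<dots> \<in> borel_measurable (hist_space m)"
  proof (rule borel_measurable_sum)
    fix j assume "j \<in> {..<m}"
    then show "(\<lambda>h::'p hist. \<chi> i k. fst (h j) $ i * fst (h j) $ k) \<in> borel_measurable (hist_space m)"
      using borel_measurable_continuous_on[OF c borel_measurable_hist_fst[of j m]] by simp
  qed
  finally show ?thesis .
qed

lemma (in finite_measure) measure_ge_le_nn_integral_div:
  assumes "f \<in> borel_measurable M" "\<And>x. f x \<ge> 0" "c > 0" "K \<ge> 0"
    and "(\<integral>\<^sup>+x. ennreal (f x) \<partial>M) \<le> ennreal K"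
  shows "measure M {x\<in>space M. c \<le> f x} \<le> K / c"
proof -
  have "c \<le> f x \<longleftrightarrow> 1 \<le> ennreal (1 / c) * ennreal (f x)" for x
  proof -
    have "ennreal (1 / c) * ennreal (f x) = ennreal (f x / c)"
      using assms(2,3) by (simp add: ennreal_mult[symmetric])
    then show ?thesis
      using assms(3) by (simp add: le_divide_eq_1_pos)
  qed
  then have "{x\<in>space M. c \<le> f x} = {x\<in>space M. 1 \<le> ennreal (1 / c) * ennreal (f x)}"
    by simp
  also have "emeasure M \<dots> \<le> ennreal (1 / c) * (\<integral>\<^sup>+x. ennreal (f x) * indicator (space M) x \<partial>M)"
    using assms(1) by (intro nn_integral_Markov_inequality) auto
  also have "\<dots> = ennreal (1 / c) * (\<integral>\<^sup>+x. ennreal (f x) \<partial>M)"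
    by (intro arg_cong[where f="(*) _"] nn_integral_cong) simp
  also have "\<dots> \<le> ennreal (1 / c) * ennreal K"
    using assms(5) by (rule mult_left_mono) (rule zero_le)
  also have "\<dots> = ennreal (K / c)"
    using assms(3,4) by (simp add: ennreal_mult[symmetric])
  finally show ?thesis
    using assms(3,4) by (simp add: emeasure_eq_measure)
qed

lemma measure_mle_error_gt_le:
  fixes Lam :: "nat \<Rightarrow> 'p::finite hist \<Rightarrow> (real^'p) measure"
  assumes "\<sigma> > 0" "B > 0" "\<epsilon> > 0"
    and Lam: "\<And>j. Lam j \<in> hist_space j \<rightarrow>\<^sub>M prob_algebra borel"
    and basis: "AE h in adaptive_traj Lam \<beta> \<sigma> m. basis_design m h"
  shows "measure (adaptive_traj Lam \<beta> \<sigma> m)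
           {h \<in> space (adaptive_traj Lam \<beta> \<sigma> m). \<epsilon> < norm (mle m h - \<beta>)}
         \<le> measure (adaptive_traj Lam \<beta> \<sigma> m)
           {h \<in> space (adaptive_traj Lam \<beta> \<sigma> m). lambda_min (gram m h) \<le> B}
           + 4 * real CARD('p) * \<sigma>\<^sup>2 / (\<epsilon>\<^sup>2 * B)"
proof -
  let ?T = "adaptive_traj Lam \<beta> \<sigma> m"
  let ?pot = "\<lambda>h. \<Sum>i\<in>UNIV. potential \<sigma> \<beta> B m h i"
  define Small where "Small = {h \<in> space ?T. lambda_min (gram m h) \<le> B}"
  define Large where "Large = {h \<in> space ?T. \<epsilon>\<^sup>2 / 4 \<le> ?pot h}"
  interpret prob_space ?T
    using prob_space_adaptive_traj[OF assms(1) Lam] .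
  note sets = measurable_cong_sets[OF sets_adaptive_traj[OF assms(1) Lam] refl]
  have [measurable]: "?pot \<in> borel_measurable ?T"
    unfolding sets by (intro borel_measurable_sum borel_measurable_potential)
  have [measurable]: "(\<lambda>h. lambda_min (gram m h)) \<in> borel_measurable ?T"
    unfolding sets by (rule measurable_compose[OF borel_measurable_gram borel_measurable_lambda_min])
  have "AE h in ?T. h \<in> {h \<in> space ?T. \<epsilon> < norm (mle m h - \<beta>)} \<longrightarrow> h \<in> Small \<union> Large"
    using basis
  proof eventually_elim
    case (elim h)
    then show ?case
      using potential_ge_of_mle_error_gt[OF elim assms(2,3), of \<beta> \<sigma>]
      by (cases "lambda_min (gram m h) \<le> B") (auto simp: Small_def Large_def)
  qed
  then have "measure ?T {h \<in> space ?T. \<epsilon> < norm (mle m h - \<beta>)} \<le> measure ?T (Small \<union> Large)"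
    unfolding Small_def Large_def by (intro finite_measure_mono_AE) measurable
  also have "\<dots> \<le> measure ?T Small + measure ?T Large"
    unfolding Small_def Large_def by (intro measure_Un_le) measurable
  also have "measure ?T Large \<le> (real CARD('p) * (\<sigma>\<^sup>2 / B)) / (\<epsilon>\<^sup>2 / 4)"
    unfolding Large_def using assms
    by (intro measure_ge_le_nn_integral_div nn_integral_sum_potential_le)
       (auto simp: potential_nonneg sum_nonneg)
  also have "\<dots> = 4 * real CARD('p) * \<sigma>\<^sup>2 / (\<epsilon>\<^sup>2 * B)"
    by (simp add: field_simps)
  finally show ?thesis
    unfolding Small_def by simp
qed

lemma LIMSEQ_zero_of_le_vanishing_plus:
  fixes a :: "nat \<Rightarrow> real"
  assumes "\<And>n. 0 \<le> a n" and "\<And>r. r > 0 \<Longrightarrow> \<exists>b. b \<longlonglongrightarrow> 0 \<and> (\<forall>n. a n \<le> b n + r)"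
  shows "a \<longlonglongrightarrow> 0"
proof (rule LIMSEQ_I)
  fix r :: real assume "r > 0"
  then obtain b where b: "b \<longlonglongrightarrow> 0" "\<And>n. a n \<le> b n + r / 2"
    using assms(2)[of "r / 2"] by auto
  obtain N where "\<forall>n\<ge>N. norm (b n - 0) < r / 2"
    using LIMSEQ_D[OF b(1)] \<open>r > 0\<close> half_gt_zero by blast
  then have "norm (a n - 0) < r" if "n \<ge> N" for n
    using that assms(1)[of n] b(2)[of n] by auto
  then show "\<exists>N. \<forall>n\<ge>N. norm (a n - 0) < r" by blast
qed

theorem lemma1:
  fixes Lam :: "nat \<Rightarrow> nat \<Rightarrow> 'p::finite hist \<Rightarrow> (real^'p) measure"
    and m :: "nat \<Rightarrow> nat" and \<beta>0 :: "real^'p" and \<sigma> :: real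
  assumes "\<sigma> > 0"
    and "\<And>n j. Lam n j \<in> hist_space j \<rightarrow>\<^sub>M prob_algebra borel"
    and "\<And>n. AE h in adaptive_traj (Lam n) \<beta>0 \<sigma> (m n).
               \<forall>j<m n. \<exists>i. fst (h j) = axis i 1"
    and "\<And>B. (\<lambda>n. measure (adaptive_traj (Lam n) \<beta>0 \<sigma> (m n))
               {h \<in> space (adaptive_traj (Lam n) \<beta>0 \<sigma> (m n)). lambda_min (gram (m n) h) \<le> B})
             \<longlonglongrightarrow> 0"
  shows "\<forall>\<epsilon>>0. (\<lambda>n. measure (adaptive_traj (Lam n) \<beta>0 \<sigma> (m n))
               {h \<in> space (adaptive_traj (Lam n) \<beta>0 \<sigma> (m n)). \<epsilon> < norm (mle (m n) h - \<beta>0)})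
             \<longlonglongrightarrow> 0"
proof (intro allI impI)
  fix \<epsilon> :: real assume "\<epsilon> > 0"
  let ?T = "\<lambda>n. adaptive_traj (Lam n) \<beta>0 \<sigma> (m n)"
  let ?err = "\<lambda>n. measure (?T n) {h \<in> space (?T n). \<epsilon> < norm (mle (m n) h - \<beta>0)}"
  let ?small = "\<lambda>B n. measure (?T n) {h \<in> space (?T n). lambda_min (gram (m n) h) \<le> B}"
  show "?err \<longlonglongrightarrow> 0"
  proof (rule LIMSEQ_zero_of_le_vanishing_plus)
    fix r :: real assume "r > 0"
    define B where "B = 4 * real CARD('p) * \<sigma>\<^sup>2 / (\<epsilon>\<^sup>2 * r)"
    have B: "B > 0" and r: "4 * real CARD('p) * \<sigma>\<^sup>2 / (\<epsilon>\<^sup>2 * B) = r"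
      using assms(1) \<open>\<epsilon> > 0\<close> \<open>r > 0\<close> by (simp_all add: B_def field_simps)
    have "?err n \<le> ?small B n + r" for n
      using measure_mle_error_gt_le[OF assms(1) B \<open>\<epsilon> > 0\<close> assms(2) assms(3)[folded basis_design_def]]
      unfolding r .
    with assms(4)[of B] show "\<exists>b. b \<longlonglongrightarrow> 0 \<and> (\<forall>n. ?err n \<le> b n + r)"
      by blast
  qed (rule measure_nonneg)
qed

end
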